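(* Let $0<t_1\le t_2\le\cdots$ be real numbers with $c=\sum_{n=1}^{\infty}t_n^{-2}<\infty$, let $g(t)=\prod_{n=1}^{\infty}\left(1-\frac{t^{2}}{t_n^{2}}\right)$, and let $0\le\beta<1$. Then for every $p>0$, \[ \int_{0}^{\infty}\frac{|g(t)|^{p}}{t^{\beta}}\,dt\;\ge\;\frac{1}{2c^{(1-\beta)/2}}\,\frac{\Gamma(p+1)\,\Gamma\!\left(\frac{1-\beta}{2}\right)}{\Gamma\!\left(\frac{1-\beta}{2}+p+1\right)} \] (the left side possibly being $+\infty$), and consequently \[ \liminf_{p\to\infty}p^{\frac{1-\beta}{2}}\int_{0}^{\infty}\frac{|g(t)|^{p}}{t^{\beta}}\,dt\;\ge\;\frac{\Gamma\!\left(\frac{1-\beta}{2}\right)}{2c^{(1-\beta)/2}}. \]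
   Context: $\Gamma$ denotes the gamma function. *)

theory Defs
  imports "HOL-Analysis.Analysis"
begin

text \<open>The canonical product g(x) = prod_{n>=1} (1 - x^2 / t_n^2); the sequence t_1, t_2, ...
  is represented as ts 0, ts 1, ...\<close>
definition g_prod :: "(nat \<Rightarrow> real) \<Rightarrow> real \<Rightarrow> real" where
  "g_prod ts x = (\<Prod>n. 1 - x\<^sup>2 / (ts n)\<^sup>2)"

end

theory Submission
  imports Defs "HOL-Real_Asymp.Real_Asymp"
begin

text \<open>Weierstrass' product inequality gives \<open>g(t) \<ge> 1 - c t\<^sup>2\<close> for \<open>0 \<le> t \<le> c\<^bsup>-1/2\<^esup>\<close>, so
  the integral dominates \<open>\<integral>\<^sub>0\<^bsup>c^(-1/2)\<^esup> (1 - c t\<^sup>2)\<^sup>p t\<^sup>-\<^sup>\<beta> dt\<close>, which the substitution \<open>s = c t\<^sup>2\<close>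
  turns into \<open>B((1-\<beta>)/2, p+1) / (2 c\<^bsup>(1-\<beta>)/2\<^esup>)\<close>. For the limit, log-convexity of \<open>\<Gamma>\<close>
  (Wendel's inequality \<open>\<Gamma>(x+a) \<le> x\<^sup>a \<Gamma>(x)\<close>) bounds \<open>p\<^sup>a \<Gamma>(p+1)/\<Gamma>(p+1+a)\<close> below by
  \<open>(p/(p+1))\<^sup>a \<longrightarrow> 1\<close>.\<close>

lemma Weierstrass_prodinf_ineq:
  fixes a :: "nat \<Rightarrow> real"
  assumes nonneg: "\<And>n. 0 \<le> a n" and summ: "summable a" and less: "suminf a < 1"
  shows "1 - suminf a \<le> (\<Prod>n. 1 - a n)"
proof -
  have le_sum: "a n \<le> suminf a" for n
    using sum_le_suminf[OF summ, of "{n}"] nonneg by auto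
  have "convergent_prod (\<lambda>n. 1 + - a n)"
  proof (rule summable_imp_convergent_prod_real)
    show "summable (\<lambda>n. \<bar>- a n\<bar>)" using summ nonneg by simp
    show "- a n \<noteq> - 1" for n using le_sum[of n] less by simp
  qed
  then have "(\<lambda>n. \<Prod>i\<le>n. 1 - a i) \<longlonglongrightarrow> (\<Prod>n. 1 - a n)"
    using convergent_prod_LIMSEQ by simp
  moreover have "1 - suminf a \<le> (\<Prod>i\<le>n. 1 - a i)" for n
  proof -
    have "1 - suminf a \<le> 1 - sum a {..n}"
      using sum_le_suminf[OF summ] nonneg by simp
    also have "\<dots> \<le> (\<Prod>i\<le>n. 1 - a i)"
      using nonneg le_sum less by (intro Weierstrass_prod_ineq) (auto intro: order.trans[of _ "suminf a"])
    finally show ?thesis .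
  qed
  ultimately show ?thesis
    by (intro LIMSEQ_le_const) auto
qed

lemma g_prod_ge:
  fixes ts :: "nat \<Rightarrow> real"
  assumes summ: "summable (\<lambda>n. 1 / (ts n)\<^sup>2)" and small: "(\<Sum>n. 1 / (ts n)\<^sup>2) * x\<^sup>2 < 1"
  shows "1 - (\<Sum>n. 1 / (ts n)\<^sup>2) * x\<^sup>2 \<le> g_prod ts x"
proof -
  have "(\<lambda>n. x\<^sup>2 / (ts n)\<^sup>2) sums ((\<Sum>n. 1 / (ts n)\<^sup>2) * x\<^sup>2)"
    using sums_mult2[OF summable_sums[OF summ], of "x\<^sup>2"] by simp
  with small show ?thesis
    using Weierstrass_prodinf_ineq[of "\<lambda>n. x\<^sup>2 / (ts n)\<^sup>2"] by (simp add: g_prod_def sums_iff)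
qed

lemma Gamma_add_le_powr:
  fixes x a :: real
  assumes x: "x > 0" and a: "0 \<le> a" "a \<le> 1"
  shows "Gamma (x + a) \<le> x powr a * Gamma x"
proof -
  have Gx: "Gamma x > 0" using x by (rule Gamma_real_pos)
  then have Gx_ne: "Gamma x \<noteq> 0" by simp
  have "ln (Gamma ((1 - a) *\<^sub>R x + a *\<^sub>R (x + 1))) \<le> (1 - a) * ln (Gamma x) + a * ln (Gamma (x + 1))"
    using convex_onD[OF log_convex_Gamma_real, of a x "x + 1"] x a by simp
  moreover have "Gamma (x + 1) = x * Gamma x"
    using x by (subst Gamma_plus1) (auto elim!: nonpos_Ints_cases)
  ultimately have "ln (Gamma (x + a)) \<le> ln (Gamma x) + a * ln x"
    using x Gx_ne by (simp add: ln_mult algebra_simps del: Gamma_plus1)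
  also have "\<dots> = ln (x powr a * Gamma x)"
    using x Gx_ne by (simp add: ln_mult ln_powr)
  finally show ?thesis
    using x a Gx Gamma_real_pos[of "x + a"] by simp
qed

lemma nn_integral_one_minus_sq_powr_div_powr:
  fixes c p \<beta> :: real
  assumes c: "c > 0" and \<beta>: "\<beta> < 1" and p: "p > -1"
  shows "(\<integral>\<^sup>+x. ennreal ((1 - c * x\<^sup>2) powr p / x powr \<beta>) * indicator {0..1 / sqrt c} x \<partial>lborel)
       = ennreal (Beta ((1 - \<beta>) / 2) (p + 1) / (2 * c powr ((1 - \<beta>) / 2)))"
proof -
  define a where "a = (1 - \<beta>) / 2"
  define F where "F t = t powr (a - 1) * (1 - t) powr p / (2 * c powr a)" for t
  have "(F has_integral Beta a (p + 1) / (2 * c powr a)) {0..1}"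
    unfolding F_def using has_integral_Beta_real[of a "p + 1"] \<beta> p
    by (intro has_integral_divide) (simp_all add: a_def)
  then have "(\<integral>\<^sup>+t. ennreal (F t) * indicator {0..1} t \<partial>lborel) = ennreal (Beta a (p + 1) / (2 * c powr a))"
    by (rule nn_integral_has_integral_lebesgue'[rotated]) (use c in \<open>simp add: F_def\<close>)
  also have "(\<integral>\<^sup>+t. ennreal (F t) * indicator {0..1} t \<partial>lborel)
      = (\<integral>\<^sup>+t. F t * indicator {c * 0\<^sup>2..c * (1 / sqrt c)\<^sup>2} t \<partial>lborel)"
    using c by (intro nn_integral_cong) (simp add: power_divide indicator_def)
  also have "\<dots> = (\<integral>\<^sup>+x. F (c * x\<^sup>2) * (2 * c * x) * indicator {0..1 / sqrt c} x \<partial>lborel)"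
  proof (rule nn_integral_substitution)
    show "set_borel_measurable borel {c * 0\<^sup>2..c * (1 / sqrt c)\<^sup>2} F"
      unfolding set_borel_measurable_def F_def by measurable
  qed (use c in \<open>auto intro!: derivative_eq_intros continuous_intros\<close>)
  also have "\<dots> = (\<integral>\<^sup>+x. ennreal ((1 - c * x\<^sup>2) powr p / x powr \<beta>) * indicator {0..1 / sqrt c} x \<partial>lborel)"
  proof (intro nn_integral_cong)
    fix x :: real
    have "F (c * x\<^sup>2) * (2 * c * x) = (1 - c * x\<^sup>2) powr p / x powr \<beta>" if x: "x > 0"
    proof -
      have "(c * x\<^sup>2) powr (a - 1) * (2 * c * x)
          = 2 * (c powr (a - 1) * c powr 1) * (x powr (2 * (a - 1)) * x powr 1)"
        using c x by (simp add: powr_mult powr_powr flip: powr_numeral)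
      also have "\<dots> = 2 * c powr a * x powr (2 * a - 1)"
        unfolding powr_add[symmetric] by (simp add: algebra_simps)
      also have "x powr (2 * a - 1) = 1 / x powr \<beta>"
        using powr_minus_divide[of x \<beta>] by (simp add: a_def diff_divide_distrib)
      finally have jacobian: "(c * x\<^sup>2) powr (a - 1) * (2 * c * x) = 2 * c powr a / x powr \<beta>"
        by simp
      have "F (c * x\<^sup>2) * (2 * c * x)
          = (c * x\<^sup>2) powr (a - 1) * (2 * c * x) * (1 - c * x\<^sup>2) powr p / (2 * c powr a)"
        by (simp add: F_def)
      then show ?thesis
        unfolding jacobian using c by simp
    qed
    then show "F (c * x\<^sup>2) * (2 * c * x) * indicator {0..1 / sqrt c} x
        = ennreal ((1 - c * x\<^sup>2) powr p / x powr \<beta>) * indicator {0..1 / sqrt c} x"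
      by (cases "x = 0") (auto simp: indicator_def F_def)
  qed
  finally show ?thesis
    by (simp add: a_def)
qed

lemma one_minus_sq_powr_le_g_prod_powr:
  fixes ts :: "nat \<Rightarrow> real"
  defines "c \<equiv> \<Sum>n. 1 / (ts n)\<^sup>2"
  assumes summ: "summable (\<lambda>n. 1 / (ts n)\<^sup>2)" and c: "c > 0" and p: "p \<ge> 0"
    and x: "0 \<le> x" "x \<le> 1 / sqrt c"
  shows "(1 - c * x\<^sup>2) powr p \<le> \<bar>g_prod ts x\<bar> powr p"
proof -
  have "c * x\<^sup>2 \<le> c * (1 / sqrt c)\<^sup>2"
    using c x by (intro mult_left_mono power_mono) auto
  then have "c * x\<^sup>2 \<le> 1"
    using c by (simp add: power_divide)
  then consider "c * x\<^sup>2 < 1" | "c * x\<^sup>2 = 1" by linarith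
  then show ?thesis
  proof cases
    case 1
    then have "1 - c * x\<^sup>2 \<le> g_prod ts x"
      using g_prod_ge[OF summ] unfolding c_def by blast
    with 1 p show ?thesis
      by (intro powr_mono2) auto
  qed simp
qed

lemma nn_integral_g_prod_powr_ge:
  fixes ts :: "nat \<Rightarrow> real" and \<beta> p :: real
  defines "c \<equiv> \<Sum>n. 1 / (ts n)\<^sup>2"
  assumes summ: "summable (\<lambda>n. 1 / (ts n)\<^sup>2)" and c: "c > 0" and \<beta>: "\<beta> < 1" and p: "p \<ge> 0"
  shows "ennreal (Beta ((1 - \<beta>) / 2) (p + 1) / (2 * c powr ((1 - \<beta>) / 2)))
       \<le> (\<integral>\<^sup>+x\<in>{0<..}. ennreal (\<bar>g_prod ts x\<bar> powr p / x powr \<beta>) \<partial>lborel)"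
proof -
  have "ennreal (Beta ((1 - \<beta>) / 2) (p + 1) / (2 * c powr ((1 - \<beta>) / 2)))
      = (\<integral>\<^sup>+x. ennreal ((1 - c * x\<^sup>2) powr p / x powr \<beta>) * indicator {0..1 / sqrt c} x \<partial>lborel)"
    using p by (simp add: nn_integral_one_minus_sq_powr_div_powr[OF c \<beta>])
  also have "\<dots> \<le> (\<integral>\<^sup>+x\<in>{0<..}. ennreal (\<bar>g_prod ts x\<bar> powr p / x powr \<beta>) \<partial>lborel)"
  proof (intro nn_integral_mono)
    fix x :: real
    \<comment> \<open>At \<open>x = 0\<close> the left integrand is \<open>_ / 0 = 0\<close>, so excluding 0 on the right costs nothing.\<close>
    show "ennreal ((1 - c * x\<^sup>2) powr p / x powr \<beta>) * indicator {0..1 / sqrt c} x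
      \<le> ennreal (\<bar>g_prod ts x\<bar> powr p / x powr \<beta>) * indicator {0<..} x"
      using one_minus_sq_powr_le_g_prod_powr[OF summ c[unfolded c_def] p, of x]
      by (cases "x = 0") (auto simp: indicator_def c_def intro!: ennreal_leI divide_right_mono)
  qed
  finally show ?thesis .
qed

lemma powr_mult_Beta_ge:
  fixes a p :: real
  assumes a: "0 < a" "a \<le> 1" and p: "p > 0"
  shows "(p / (p + 1)) powr a * Gamma a \<le> p powr a * Beta a (p + 1)"
proof -
  have "Gamma (p + 1 + a) \<le> (p + 1) powr a * Gamma (p + 1)"
    using p a by (intro Gamma_add_le_powr) auto
  moreover have "Gamma (p + 1) > 0" "Gamma (p + 1 + a) > 0" "Gamma a > 0"
    using p a by (auto intro: Gamma_real_pos)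
  ultimately show ?thesis
    using p by (simp add: Beta_def powr_divide field_simps add_ac mult_left_mono)
qed

lemma Liminf_powr_mult_ge_of_Beta_le:
  fixes f :: "real \<Rightarrow> ennreal" and a K :: real
  assumes a: "0 < a" "a \<le> 1" and K: "K \<ge> 0"
    and f: "\<And>p. p > 0 \<Longrightarrow> ennreal (K * Beta a (p + 1)) \<le> f p"
  shows "ennreal (K * Gamma a) \<le> Liminf at_top (\<lambda>p. ennreal (p powr a) * f p)"
proof -
  define L where "L p = (p / (p + 1)) powr a * (K * Gamma a)" for p
  have L_le: "\<forall>\<^sub>F p in at_top. ennreal (L p) \<le> ennreal (p powr a) * f p"
  proof (intro eventually_mono[OF eventually_gt_at_top[of 0]])
    fix p :: real assume p: "p > 0"
    have "ennreal (L p) \<le> ennreal (p powr a * (K * Beta a (p + 1)))"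
      using mult_left_mono[OF powr_mult_Beta_ge[OF a p] K] by (intro ennreal_leI) (simp add: L_def mult_ac)
    also have "\<dots> = ennreal (p powr a) * ennreal (K * Beta a (p + 1))"
      by (rule ennreal_mult') simp
    also have "\<dots> \<le> ennreal (p powr a) * f p"
      by (rule mult_left_mono[OF f[OF p]]) simp
    finally show "ennreal (L p) \<le> ennreal (p powr a) * f p" .
  qed
  have "((\<lambda>p. (p / (p + 1)) powr a) \<longlongrightarrow> 1) at_top"
    by real_asymp
  then have "((\<lambda>p. ennreal (L p)) \<longlongrightarrow> ennreal (K * Gamma a)) at_top"
    using tendsto_mult_right[of _ 1 _ "K * Gamma a"] unfolding L_def by (intro tendsto_ennrealI) simp
  then have "Liminf at_top (\<lambda>p. ennreal (L p)) = ennreal (K * Gamma a)"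
    by (intro lim_imp_Liminf) simp_all
  with Liminf_mono[OF L_le] show ?thesis
    by simp
qed

theorem mainTheorem8:
  fixes ts :: "nat \<Rightarrow> real" and \<beta> :: real
  assumes pos: "ts 0 > 0"
    and mono: "mono ts"
    and summ: "summable (\<lambda>n. 1 / (ts n)\<^sup>2)"
    and beta: "0 \<le> \<beta>" "\<beta> < 1"
  defines "c \<equiv> (\<Sum>n. 1 / (ts n)\<^sup>2)"
  shows "(\<forall>p::real. p > 0 \<longrightarrow>
           (\<integral>\<^sup>+ x \<in> {0<..}. ennreal (\<bar>g_prod ts x\<bar> powr p / x powr \<beta>) \<partial>lborel)
           \<ge> ennreal (1 / (2 * c powr ((1 - \<beta>) / 2)) *
                 (Gamma (p + 1) * Gamma ((1 - \<beta>) / 2) / Gamma ((1 - \<beta>) / 2 + p + 1))))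
       \<and> Liminf at_top (\<lambda>p::real. ennreal (p powr ((1 - \<beta>) / 2)) *
           (\<integral>\<^sup>+ x \<in> {0<..}. ennreal (\<bar>g_prod ts x\<bar> powr p / x powr \<beta>) \<partial>lborel))
         \<ge> ennreal (Gamma ((1 - \<beta>) / 2) / (2 * c powr ((1 - \<beta>) / 2)))"
proof -
  define a where "a = (1 - \<beta>) / 2"
  define I where "I p = (\<integral>\<^sup>+ x \<in> {0<..}. ennreal (\<bar>g_prod ts x\<bar> powr p / x powr \<beta>) \<partial>lborel)" for p
  have a: "0 < a" "a \<le> 1"
    using beta by (auto simp: a_def)
  have "0 < 1 / (ts 0)\<^sup>2" "1 / (ts 0)\<^sup>2 \<le> c"
    using pos sum_le_suminf[OF summ, of "{0}"] by (auto simp: c_def)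
  then have c: "c > 0" by linarith
  have I_ge: "ennreal (1 / (2 * c powr a) * Beta a (p + 1)) \<le> I p" if "p > 0" for p
    using nn_integral_g_prod_powr_ge[OF summ _ beta(2)] c that by (simp add: I_def a_def c_def)
  then have "ennreal (1 / (2 * c powr a) * Gamma a) \<le> Liminf at_top (\<lambda>p. ennreal (p powr a) * I p)"
    using a c by (intro Liminf_powr_mult_ge_of_Beta_le) auto
  moreover have "ennreal (1 / (2 * c powr a) * (Gamma (p + 1) * Gamma a / Gamma (a + p + 1))) \<le> I p"
    if "p > 0" for p
    using I_ge[OF that] by (simp add: Beta_def add_ac mult_ac)
  ultimately show ?thesis
    unfolding I_def a_def by simp
qed

end
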